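(* Let $k$ be an algebraically closed field of characteristic $0$, $G$ a finite group and $V$ any finite-dimensional $G$-module. Then $\mathrm{pol\,ind}(V)=\infty$.
   Context: For $n\in\mathbb N$, $G$ acts diagonally on $V^{\oplus n}$. Polarizations of $f\in k[V]$: $f(\alpha_1v_1+\dots+\alpha_nv_n)=\sum_{(i_1,\dots,i_n)\in\mathbb Z_+^n}\alpha_1^{i_1}\cdots\alpha_n^{i_n}f_{i_1,\dots,i_n}(v_1,\dots,v_n)$; $\mathrm{pol}_nk[V]^G\subseteq k[V^{\oplus n}]^G$ is generated by polarizations of all $f\in k[V]^G$. $\mathcal N_{V^{\oplus n},G}=\{w:F(w)=F(0)\ \forall F\in k[V^{\oplus n}]^G\}$, $\mathcal P_{V^{\oplus n},G}=\{w:h(w)=h(0)\ \forall h\in\mathrm{pol}_nk[V]^G\}$. The polarization index $\mathrm{pol\,ind}(V)$ is the supremum of all $n\in\mathbb N$ with $\mathcal N_{V^{\oplus n},G}=\mathcal P_{V^{\oplus n},G}$. *)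

theory Defs
  imports "HOL-Algebra.Group" "HOL-Computational_Algebra.Polynomial" "HOL-Library.Extended_Nat"
begin

definition alg_closed :: "'k::field itself \<Rightarrow> bool" where
  "alg_closed _ \<longleftrightarrow> (\<forall>p :: 'k poly. degree p > 0 \<longrightarrow> (\<exists>x. poly p x = 0))"

text \<open>The k-algebra of functions generated by a set C of functions (constants, C, sums, products).
  With C the coordinate functions this is the algebra of polynomial functions.\<close>
inductive_set gen_alg :: "('a \<Rightarrow> 'k::comm_ring_1) set \<Rightarrow> ('a \<Rightarrow> 'k) set" for C where
  const: "(\<lambda>_. c) \<in> gen_alg C"
| gen: "f \<in> C \<Longrightarrow> f \<in> gen_alg C"
| add: "f \<in> gen_alg C \<Longrightarrow> g \<in> gen_alg C \<Longrightarrow> (\<lambda>x. f x + g x) \<in> gen_alg C"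
| mult: "f \<in> gen_alg C \<Longrightarrow> g \<in> gen_alg C \<Longrightarrow> (\<lambda>x. f x * g x) \<in> gen_alg C"

text \<open>V is modelled as the coordinate space 'd \<Rightarrow> 'k ('d a finite index type).
  k[V]: polynomial functions on V.\<close>
definition polys_V :: "(('d \<Rightarrow> 'k::comm_ring_1) \<Rightarrow> 'k) set" where
  "polys_V = gen_alg {(\<lambda>v. v j) | j. True}"

text \<open>V^{\<oplus>n}: n-tuples (w 0, ..., w (n-1)) of vectors, encoded as nat-indexed families vanishing from n on.\<close>
definition Vsum :: "nat \<Rightarrow> (nat \<Rightarrow> 'd \<Rightarrow> 'k::zero) set" where
  "Vsum n = {w. \<forall>i\<ge>n. w i = (\<lambda>_. 0)}"

definition polys_Vn :: "nat \<Rightarrow> ((nat \<Rightarrow> 'd \<Rightarrow> 'k::comm_ring_1) \<Rightarrow> 'k) set" where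
  "polys_Vn n = gen_alg {(\<lambda>w. w i j) | i j. i < n}"

definition G_module :: "('g, 'm) monoid_scheme \<Rightarrow> ('g \<Rightarrow> ('d \<Rightarrow> 'k::field) \<Rightarrow> ('d \<Rightarrow> 'k)) \<Rightarrow> bool" where
  "G_module G \<rho> \<longleftrightarrow>
     (\<forall>g\<in>carrier G. \<forall>u v. \<rho> g (\<lambda>j. u j + v j) = (\<lambda>j. \<rho> g u j + \<rho> g v j)) \<and>
     (\<forall>g\<in>carrier G. \<forall>c v. \<rho> g (\<lambda>j. c * v j) = (\<lambda>j. c * \<rho> g v j)) \<and>
     (\<forall>v. \<rho> \<one>\<^bsub>G\<^esub> v = v) \<and>
     (\<forall>g\<in>carrier G. \<forall>h\<in>carrier G. \<forall>v. \<rho> (g \<otimes>\<^bsub>G\<^esub> h) v = \<rho> g (\<rho> h v))"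

definition inv_V :: "('g, 'm) monoid_scheme \<Rightarrow> ('g \<Rightarrow> ('d \<Rightarrow> 'k::field) \<Rightarrow> ('d \<Rightarrow> 'k)) \<Rightarrow> (('d \<Rightarrow> 'k) \<Rightarrow> 'k) set" where
  "inv_V G \<rho> = {f \<in> polys_V. \<forall>g\<in>carrier G. \<forall>v. f (\<rho> g v) = f v}"

definition inv_Vn :: "('g, 'm) monoid_scheme \<Rightarrow> ('g \<Rightarrow> ('d \<Rightarrow> 'k::field) \<Rightarrow> ('d \<Rightarrow> 'k)) \<Rightarrow> nat
    \<Rightarrow> ((nat \<Rightarrow> 'd \<Rightarrow> 'k) \<Rightarrow> 'k) set" where
  "inv_Vn G \<rho> n = {F \<in> polys_Vn n. \<forall>g\<in>carrier G. \<forall>w\<in>Vsum n. F (\<lambda>i. \<rho> g (w i)) = F w}"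

text \<open>h is a family of polarizations of f: the coefficient functions h e (e a multi-index supported
  in {..<n}) in the expansion f(\<alpha>_0 v_0 + ... + \<alpha>_{n-1} v_{n-1}) = \<Sum>_e \<alpha>^e h_e(v).
  Only finitely many h e are nonzero; over an infinite field these are uniquely determined.\<close>
definition pol_family :: "nat \<Rightarrow> (('d \<Rightarrow> 'k::field) \<Rightarrow> 'k) \<Rightarrow> ((nat \<Rightarrow> nat) \<Rightarrow> (nat \<Rightarrow> 'd \<Rightarrow> 'k) \<Rightarrow> 'k) \<Rightarrow> bool" where
  "pol_family n f h \<longleftrightarrow>
     (\<forall>e. h e \<in> polys_Vn n) \<and>
     finite {e. h e \<noteq> (\<lambda>_. 0)} \<and>
     (\<forall>e. (\<exists>i\<ge>n. e i \<noteq> 0) \<longrightarrow> h e = (\<lambda>_. 0)) \<and>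
     (\<forall>\<alpha> w. w \<in> Vsum n \<longrightarrow>
        f (\<lambda>j. \<Sum>i<n. \<alpha> i * w i j) =
        (\<Sum>e\<in>{e. h e \<noteq> (\<lambda>_. 0)}. (\<Prod>i<n. \<alpha> i ^ e i) * h e w))"

definition pol_inv :: "('g, 'm) monoid_scheme \<Rightarrow> ('g \<Rightarrow> ('d \<Rightarrow> 'k::field) \<Rightarrow> ('d \<Rightarrow> 'k)) \<Rightarrow> nat
    \<Rightarrow> ((nat \<Rightarrow> 'd \<Rightarrow> 'k) \<Rightarrow> 'k) set" where
  "pol_inv G \<rho> n = gen_alg {h e | f h e. f \<in> inv_V G \<rho> \<and> pol_family n f h}"

definition nullcone :: "('g, 'm) monoid_scheme \<Rightarrow> ('g \<Rightarrow> ('d \<Rightarrow> 'k::field) \<Rightarrow> ('d \<Rightarrow> 'k)) \<Rightarrow> nat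
    \<Rightarrow> (nat \<Rightarrow> 'd \<Rightarrow> 'k) set" where
  "nullcone G \<rho> n = {w \<in> Vsum n. \<forall>F\<in>inv_Vn G \<rho> n. F w = F (\<lambda>_ _. 0)}"

definition pol_nullcone :: "('g, 'm) monoid_scheme \<Rightarrow> ('g \<Rightarrow> ('d \<Rightarrow> 'k::field) \<Rightarrow> ('d \<Rightarrow> 'k)) \<Rightarrow> nat
    \<Rightarrow> (nat \<Rightarrow> 'd \<Rightarrow> 'k) set" where
  "pol_nullcone G \<rho> n = {w \<in> Vsum n. \<forall>h\<in>pol_inv G \<rho> n. h w = h (\<lambda>_ _. 0)}"

definition pol_ind :: "('g, 'm) monoid_scheme \<Rightarrow> ('g \<Rightarrow> ('d \<Rightarrow> 'k::field) \<Rightarrow> ('d \<Rightarrow> 'k)) \<Rightarrow> enat" where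
  "pol_ind G \<rho> = Sup {enat n | n. nullcone G \<rho> n = pol_nullcone G \<rho> n}"

end

theory Submission
  imports Defs
begin

text \<open>Invariants of a finite group separate the origin from every other vector: if
  \<open>v\<^sub>j \<noteq> 0\<close>, the invariant \<open>u \<mapsto> \<Prod>\<^bsub>g \<in> G\<^esub> ((\<rho> g u)\<^sub>j - v\<^sub>j)\<close> vanishes at \<open>v\<close> but not at \<open>0\<close>.
  Hence the nullcone of \<open>V\<^sup>\<oplus>\<^sup>n\<close> is \<open>{0}\<close>. So is the polarization nullcone: every polynomial
  has polarizations, and putting \<open>\<alpha> = e\<^sub>i\<close> in the polarization identity of an invariant \<open>f\<close>
  expresses \<open>f(w\<^sub>i)\<close> through the polarizations of \<open>f\<close>, so each component of a point of the
  polarization nullcone lies in the nullcone of \<open>V\<close>. The two nullcones therefore agree for every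
  \<open>n\<close>.\<close>

lemma gen_alg_sum:
  assumes "finite S" "\<And>x. x \<in> S \<Longrightarrow> f x \<in> gen_alg C"
  shows "(\<lambda>w. \<Sum>x\<in>S. f x w) \<in> gen_alg C"
  using assms
proof (induction S rule: finite_induct)
  case empty
  then show ?case using gen_alg.const[of 0 C] by simp
next
  case (insert x F)
  then show ?case using gen_alg.add[of "f x" C "\<lambda>w. \<Sum>x\<in>F. f x w"] by simp
qed

lemma gen_alg_prod:
  assumes "finite S" "\<And>x. x \<in> S \<Longrightarrow> f x \<in> gen_alg C"
  shows "(\<lambda>w. \<Prod>x\<in>S. f x w) \<in> gen_alg C"
  using assms
proof (induction S rule: finite_induct)
  case empty
  then show ?case using gen_alg.const[of 1 C] by simp
next
  case (insert x F)
  then show ?case using gen_alg.mult[of "f x" C "\<lambda>w. \<Prod>x\<in>F. f x w"] by simp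
qed

lemma gen_alg_compose:
  assumes "f \<in> gen_alg C" "\<And>c. c \<in> C \<Longrightarrow> (\<lambda>x. c (\<phi> x)) \<in> gen_alg D"
  shows "(\<lambda>x. f (\<phi> x)) \<in> gen_alg D"
  using assms
  by (induction f rule: gen_alg.induct) (auto intro: gen_alg.intros)

lemma linear_form_expansion:
  fixes L :: "('d::finite \<Rightarrow> 'k::comm_ring_1) \<Rightarrow> 'k"
  assumes add: "\<And>u v. L (\<lambda>j. u j + v j) = L u + L v"
    and scale: "\<And>c v. L (\<lambda>j. c * v j) = c * L v"
  shows "L u = (\<Sum>d\<in>UNIV. u d * L (\<lambda>j. if j = d then 1 else 0))"
proof -
  have partial: "L (\<lambda>j. \<Sum>d\<in>S. u d * (if j = d then 1 else 0)) =
      (\<Sum>d\<in>S. u d * L (\<lambda>j. if j = d then 1 else 0))" if "finite S" for S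
    using that
  proof (induction S rule: finite_induct)
    case empty
    then show ?case using scale[of 0 "\<lambda>_. 0"] by simp
  next
    case (insert x F)
    then show ?case
      using add[of "\<lambda>j. u x * (if j = x then 1 else 0)"] scale[of "u x"] by simp
  qed
  have "u = (\<lambda>j. \<Sum>d\<in>UNIV. u d * (if j = d then 1 else 0))"
    by (simp add: if_distrib cong: if_cong)
  then show ?thesis using partial[of UNIV] by simp
qed

lemma linear_form_in_polys_V:
  fixes L :: "('d::finite \<Rightarrow> 'k::comm_ring_1) \<Rightarrow> 'k"
  assumes add: "\<And>u v. L (\<lambda>j. u j + v j) = L u + L v"
    and scale: "\<And>c v. L (\<lambda>j. c * v j) = c * L v"
  shows "L \<in> polys_V"
proof -
  have "(\<lambda>u. u d * L (\<lambda>j. if j = d then 1 else 0)) \<in> polys_V" for d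
    unfolding polys_V_def by (rule gen_alg.mult[OF gen_alg.gen gen_alg.const]) blast
  then have poly: "(\<lambda>u. \<Sum>d\<in>UNIV. u d * L (\<lambda>j. if j = d then 1 else 0)) \<in> polys_V"
    unfolding polys_V_def by (intro gen_alg_sum) simp_all
  have expansion: "(\<lambda>u. \<Sum>d\<in>UNIV. u d * L (\<lambda>j. if j = d then 1 else 0)) = L"
  proof
    fix u
    show "(\<Sum>d\<in>UNIV. u d * L (\<lambda>j. if j = d then 1 else 0)) = L u"
      by (rule sym, rule linear_form_expansion) (fact add scale)+
  qed
  from poly show ?thesis unfolding expansion .
qed

section \<open>Invariants of a finite group separate the origin\<close>

lemma G_module_zero:
  assumes "G_module G \<rho>" "g \<in> carrier G"
  shows "\<rho> g (\<lambda>_. 0) = (\<lambda>_. 0)"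
proof -
  have "\<rho> g (\<lambda>j. 0 * v j) = (\<lambda>j. 0 * \<rho> g v j)" for v
    using assms unfolding G_module_def by blast
  from this[of "\<lambda>_. 0"] show ?thesis by simp
qed

lemma G_module_coordinate_in_polys_V:
  fixes \<rho> :: "'g \<Rightarrow> ('d::finite \<Rightarrow> 'k::field) \<Rightarrow> ('d \<Rightarrow> 'k)"
  assumes "G_module G \<rho>" "g \<in> carrier G"
  shows "(\<lambda>u. \<rho> g u j) \<in> polys_V"
  using assms unfolding G_module_def by (intro linear_form_in_polys_V) simp_all

lemma (in group) prod_reindex_right_mult:
  assumes "h \<in> carrier G"
  shows "(\<Prod>g\<in>carrier G. f (g \<otimes> h)) = (\<Prod>g\<in>carrier G. f g)"
  by (rule prod.reindex_bij_witness[where i = "\<lambda>g. g \<otimes> inv h" and j = "\<lambda>g. g \<otimes> h"])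
    (use assms in \<open>simp_all add: m_assoc\<close>)

lemma orbit_product_in_inv_V:
  fixes \<rho> :: "'g \<Rightarrow> ('d::finite \<Rightarrow> 'k::field) \<Rightarrow> ('d \<Rightarrow> 'k)"
  assumes "group G" "finite (carrier G)" "G_module G \<rho>"
  shows "(\<lambda>u. \<Prod>g\<in>carrier G. t + \<rho> g u j) \<in> inv_V G \<rho>"
  unfolding inv_V_def
proof (intro CollectI conjI ballI allI)
  have "(\<lambda>u. t + \<rho> g u j) \<in> polys_V" if "g \<in> carrier G" for g
    using G_module_coordinate_in_polys_V[OF assms(3) that] unfolding polys_V_def
    by (rule gen_alg.add[OF gen_alg.const])
  then show "(\<lambda>u. \<Prod>g\<in>carrier G. t + \<rho> g u j) \<in> polys_V"
    unfolding polys_V_def using assms(2) by (intro gen_alg_prod)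
  fix h u assume h: "h \<in> carrier G"
  have "(\<Prod>g\<in>carrier G. t + \<rho> g (\<rho> h u) j) = (\<Prod>g\<in>carrier G. t + \<rho> (g \<otimes>\<^bsub>G\<^esub> h) u j)"
    using assms(3) h unfolding G_module_def by (intro prod.cong) simp_all
  also have "\<dots> = (\<Prod>g\<in>carrier G. t + \<rho> g u j)"
    using group.prod_reindex_right_mult[OF assms(1) h] .
  finally show "(\<Prod>g\<in>carrier G. t + \<rho> g (\<rho> h u) j) = (\<Prod>g\<in>carrier G. t + \<rho> g u j)" .
qed

lemma inv_V_separates_zero:
  fixes \<rho> :: "'g \<Rightarrow> ('d::finite \<Rightarrow> 'k::field) \<Rightarrow> ('d \<Rightarrow> 'k)"
  assumes "group G" "finite (carrier G)" "G_module G \<rho>"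
    and "\<forall>f\<in>inv_V G \<rho>. f v = f (\<lambda>_. 0)"
  shows "v = (\<lambda>_. 0)"
proof (rule ccontr)
  assume "v \<noteq> (\<lambda>_. 0)"
  then obtain j where "v j \<noteq> 0" by auto
  define f where "f = (\<lambda>u. \<Prod>g\<in>carrier G. - v j + \<rho> g u j)"
  have "f v = f (\<lambda>_. 0)"
    using bspec[OF assms(4) orbit_product_in_inv_V[OF assms(1-3), of "- v j" j]] unfolding f_def .
  moreover have "f v = 0"
    \<comment> \<open>the factor of the identity element vanishes\<close>
    using assms(1-3) unfolding f_def G_module_def
    by (intro prod_zero bexI[of _ "\<one>\<^bsub>G\<^esub>"]) (simp_all add: group.is_monoid)
  moreover have "f (\<lambda>_. 0) = (- v j) ^ card (carrier G)"
    unfolding f_def using G_module_zero[OF assms(3)] by simp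
  ultimately show False using \<open>v j \<noteq> 0\<close> by simp
qed

lemma component_in_inv_Vn:
  fixes \<rho> :: "'g \<Rightarrow> ('d \<Rightarrow> 'k::field) \<Rightarrow> ('d \<Rightarrow> 'k)"
  assumes "f \<in> inv_V G \<rho>" "i < n"
  shows "(\<lambda>w. f (w i)) \<in> inv_Vn G \<rho> n"
proof -
  have "(\<lambda>w. f (w i)) \<in> polys_Vn n"
    unfolding polys_Vn_def
  proof (rule gen_alg_compose[where f = f and \<phi> = "\<lambda>w. w i"])
    show "f \<in> gen_alg {(\<lambda>v. v j) | j. True}"
      using assms(1) unfolding inv_V_def polys_V_def by blast
  next
    fix c :: "('d \<Rightarrow> 'k) \<Rightarrow> 'k" assume "c \<in> {(\<lambda>v. v j) | j. True}"
    then show "(\<lambda>w. c (w i)) \<in> gen_alg {(\<lambda>w. w i j) | i j. i < n}"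
      using assms(2) by (auto intro: gen_alg.gen)
  qed
  then show ?thesis using assms(1) unfolding inv_Vn_def inv_V_def by simp
qed

lemma Vsum_eq_zero_if_invariants_trivial_on_components:
  fixes \<rho> :: "'g \<Rightarrow> ('d::finite \<Rightarrow> 'k::field) \<Rightarrow> ('d \<Rightarrow> 'k)"
  assumes "group G" "finite (carrier G)" "G_module G \<rho>"
    and "w \<in> Vsum n"
    and "\<And>i f. i < n \<Longrightarrow> f \<in> inv_V G \<rho> \<Longrightarrow> f (w i) = f (\<lambda>_. 0)"
  shows "w = (\<lambda>_ _. 0)"
proof
  fix i
  show "w i = (\<lambda>_. 0)"
  proof (cases "i < n")
    case False
    then show ?thesis using assms(4) unfolding Vsum_def by simp
  next
    case True
    then show ?thesis using inv_V_separates_zero[OF assms(1-3)] assms(5) by blast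
  qed
qed

lemma nullcone_eq_zero:
  fixes \<rho> :: "'g \<Rightarrow> ('d::finite \<Rightarrow> 'k::field) \<Rightarrow> ('d \<Rightarrow> 'k)"
  assumes "group G" "finite (carrier G)" "G_module G \<rho>"
  shows "nullcone G \<rho> n = {\<lambda>_ _. 0}"
proof -
  have "w = (\<lambda>_ _. 0)" if w: "w \<in> nullcone G \<rho> n" for w
  proof (rule Vsum_eq_zero_if_invariants_trivial_on_components[OF assms])
    show "w \<in> Vsum n" using w unfolding nullcone_def by blast
    fix i f assume "i < n" "f \<in> inv_V G \<rho>"
    then show "f (w i) = f (\<lambda>_. 0)"
      using w component_in_inv_Vn unfolding nullcone_def by fastforce
  qed
  then show ?thesis unfolding nullcone_def Vsum_def by auto
qed

section \<open>Polarizations\<close>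

text \<open>Unlike
  \<^const>\<open>pol_family\<close>, which sums over the nonzero members, this form is preserved by sums and
  products.\<close>
definition polarization_on ::
    "nat \<Rightarrow> (('d \<Rightarrow> 'k::comm_ring_1) \<Rightarrow> 'k) \<Rightarrow> ((nat \<Rightarrow> nat) \<Rightarrow> (nat \<Rightarrow> 'd \<Rightarrow> 'k) \<Rightarrow> 'k)
      \<Rightarrow> (nat \<Rightarrow> nat) set \<Rightarrow> bool" where
  "polarization_on n f h S \<longleftrightarrow>
     finite S \<and> (\<forall>e\<in>S. \<forall>i\<ge>n. e i = 0) \<and> (\<forall>e. e \<notin> S \<longrightarrow> h e = (\<lambda>_. 0)) \<and>
     (\<forall>e. h e \<in> polys_Vn n) \<and>
     (\<forall>\<alpha> w. f (\<lambda>j. \<Sum>i<n. \<alpha> i * w i j) = (\<Sum>e\<in>S. (\<Prod>i<n. \<alpha> i ^ e i) * h e w))"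

lemma polarization_on_imp_pol_family:
  assumes "polarization_on n f h S"
  shows "pol_family n f h"
proof -
  have fin: "finite S" and supp: "{e. h e \<noteq> (\<lambda>_. 0)} \<subseteq> S"
    and S_bounded: "\<forall>e\<in>S. \<forall>i\<ge>n. e i = 0" and poly: "\<forall>e. h e \<in> polys_Vn n"
    and expand: "\<forall>\<alpha> w. f (\<lambda>j. \<Sum>i<n. \<alpha> i * w i j) = (\<Sum>e\<in>S. (\<Prod>i<n. \<alpha> i ^ e i) * h e w)"
    using assms unfolding polarization_on_def by auto
  have "(\<Sum>e\<in>S. (\<Prod>i<n. \<alpha> i ^ e i) * h e w) =
      (\<Sum>e\<in>{e. h e \<noteq> (\<lambda>_. 0)}. (\<Prod>i<n. \<alpha> i ^ e i) * h e w)" for \<alpha> w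
    by (rule sum.mono_neutral_right[OF fin supp]) simp
  moreover have "h e = (\<lambda>_. 0)" if "\<exists>i\<ge>n. e i \<noteq> 0" for e
  proof (rule ccontr)
    assume "h e \<noteq> (\<lambda>_. 0)"
    then have "e \<in> S" by (intro subsetD[OF supp] CollectI)
    then show False using that S_bounded by auto
  qed
  ultimately show ?thesis
    using finite_subset[OF supp fin] poly expand unfolding pol_family_def
    by (intro conjI allI impI) simp_all
qed

lemma polarization_on_const:
  "polarization_on n (\<lambda>_. c) (\<lambda>e. if e = (\<lambda>_. 0) then (\<lambda>_. c) else (\<lambda>_. 0)) {\<lambda>_. 0}"
  unfolding polarization_on_def polys_Vn_def by (auto intro: gen_alg.const)

lemma polarization_on_coordinate:
  fixes j :: 'd
  defines "\<delta> \<equiv> \<lambda>i i'. if i' = i then 1 else 0 :: nat"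
  shows "polarization_on n (\<lambda>v :: 'd \<Rightarrow> 'k::comm_ring_1. v j)
    (\<lambda>e w. \<Sum>i<n. if e = \<delta> i then w i j else 0) (\<delta> ` {..<n})"
proof -
  have "(\<lambda>w. \<Sum>i<n. if e = \<delta> i then w i j else 0) \<in> polys_Vn n" for e
    unfolding polys_Vn_def
  proof (intro gen_alg_sum)
    fix i assume "i \<in> {..<n}"
    then show "(\<lambda>w. if e = \<delta> i then w i j else 0) \<in> gen_alg {(\<lambda>w. w i j) | i j. i < n}"
      by (cases "e = \<delta> i") (auto intro: gen_alg.intros)
  qed simp
  moreover have "(\<lambda>w. \<Sum>i<n. if e = \<delta> i then w i j else 0) = (\<lambda>_. 0 :: 'k)"
    if "e \<notin> \<delta> ` {..<n}" for e
    using that by (intro ext sum.neutral) auto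
  moreover have "(\<Sum>i<n. \<alpha> i * w i j) =
      (\<Sum>e\<in>\<delta> ` {..<n}. (\<Prod>i<n. \<alpha> i ^ e i) * (\<Sum>i<n. if e = \<delta> i then w i j else 0))"
    for \<alpha> :: "nat \<Rightarrow> 'k" and w :: "nat \<Rightarrow> 'd \<Rightarrow> 'k"
  proof -
    have monomial: "(\<Prod>i'<n. \<alpha> i' ^ \<delta> i i') = \<alpha> i" if "i < n" for i
      using that unfolding \<delta>_def by (simp add: if_distrib cong: if_cong)
    have "(\<Sum>e\<in>\<delta> ` {..<n}. (\<Prod>i<n. \<alpha> i ^ e i) * (\<Sum>i<n. if e = \<delta> i then w i j else 0)) =
        (\<Sum>e\<in>\<delta> ` {..<n}. \<Sum>i<n. (\<Prod>i<n. \<alpha> i ^ e i) * (if e = \<delta> i then w i j else 0))"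
      by (simp add: sum_distrib_left)
    also have "\<dots> = (\<Sum>i<n. \<Sum>e\<in>\<delta> ` {..<n}. (\<Prod>i<n. \<alpha> i ^ e i) * (if e = \<delta> i then w i j else 0))"
      by (rule sum.swap)
    also have "\<dots> = (\<Sum>i<n. \<alpha> i * w i j)"
      by (intro sum.cong refl) (simp add: if_distrib[of "\<lambda>x. _ * x"] monomial cong: if_cong)
    finally show ?thesis by simp
  qed
  ultimately show ?thesis
    unfolding polarization_on_def by (auto simp: \<delta>_def)
qed

lemma polarization_on_add:
  assumes "polarization_on n f1 h1 S1" "polarization_on n f2 h2 S2"
  shows "polarization_on n (\<lambda>v. f1 v + f2 v) (\<lambda>e w. h1 e w + h2 e w) (S1 \<union> S2)"
proof -
  have fin: "finite S1" "finite S2"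
    and out1: "\<And>e. e \<notin> S1 \<Longrightarrow> h1 e = (\<lambda>_. 0)" and out2: "\<And>e. e \<notin> S2 \<Longrightarrow> h2 e = (\<lambda>_. 0)"
    using assms unfolding polarization_on_def by auto
  have "(\<Sum>e\<in>S1. (\<Prod>i<n. \<alpha> i ^ e i) * h1 e w) = (\<Sum>e\<in>S1 \<union> S2. (\<Prod>i<n. \<alpha> i ^ e i) * h1 e w)"
    "(\<Sum>e\<in>S2. (\<Prod>i<n. \<alpha> i ^ e i) * h2 e w) = (\<Sum>e\<in>S1 \<union> S2. (\<Prod>i<n. \<alpha> i ^ e i) * h2 e w)"
    for \<alpha> w
    by (auto intro!: sum.mono_neutral_left simp: fin out1 out2)
  with assms show ?thesis
    unfolding polarization_on_def polys_Vn_def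
    by (auto simp: distrib_left sum.distrib out1 out2 intro: gen_alg.add)
qed

lemma polarization_on_mult:
  fixes h1 h2 :: "(nat \<Rightarrow> nat) \<Rightarrow> (nat \<Rightarrow> 'd \<Rightarrow> 'k::comm_ring_1) \<Rightarrow> 'k"
  defines "add_pair \<equiv> \<lambda>p :: (nat \<Rightarrow> nat) \<times> (nat \<Rightarrow> nat). \<lambda>i. fst p i + snd p i"
  assumes "polarization_on n f1 h1 S1" "polarization_on n f2 h2 S2"
  shows "polarization_on n (\<lambda>v. f1 v * f2 v)
    (\<lambda>e w. \<Sum>p\<in>{p \<in> S1 \<times> S2. add_pair p = e}. h1 (fst p) w * h2 (snd p) w)
    (add_pair ` (S1 \<times> S2))"
proof -
  have fin: "finite (S1 \<times> S2)" using assms unfolding polarization_on_def by simp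
  have "f1 (\<lambda>j. \<Sum>i<n. \<alpha> i * w i j) * f2 (\<lambda>j. \<Sum>i<n. \<alpha> i * w i j) =
      (\<Sum>e\<in>add_pair ` (S1 \<times> S2). (\<Prod>i<n. \<alpha> i ^ e i) *
        (\<Sum>p\<in>{p \<in> S1 \<times> S2. add_pair p = e}. h1 (fst p) w * h2 (snd p) w))"
    for \<alpha> w
  proof -
    define A where "A = (\<lambda>e. \<Prod>i<n. \<alpha> i ^ e i)"
    have A_add_pair: "A (add_pair p) = A (fst p) * A (snd p)" for p
      unfolding A_def add_pair_def by (simp add: power_add prod.distrib)
    have "f1 (\<lambda>j. \<Sum>i<n. \<alpha> i * w i j) * f2 (\<lambda>j. \<Sum>i<n. \<alpha> i * w i j)
        = (\<Sum>e1\<in>S1. A e1 * h1 e1 w) * (\<Sum>e2\<in>S2. A e2 * h2 e2 w)"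
      using assms unfolding polarization_on_def A_def by simp
    also have "\<dots> = (\<Sum>p\<in>S1 \<times> S2. A (add_pair p) * (h1 (fst p) w * h2 (snd p) w))"
      by (simp add: sum_product sum.cartesian_product split_def A_add_pair mult_ac)
    also have "\<dots> = (\<Sum>e\<in>add_pair ` (S1 \<times> S2). \<Sum>p\<in>{p \<in> S1 \<times> S2. add_pair p = e}.
        A (add_pair p) * (h1 (fst p) w * h2 (snd p) w))"
      by (rule sum.image_gen[OF fin])
    also have "\<dots> = (\<Sum>e\<in>add_pair ` (S1 \<times> S2). A e *
        (\<Sum>p\<in>{p \<in> S1 \<times> S2. add_pair p = e}. h1 (fst p) w * h2 (snd p) w))"
      by (simp add: sum_distrib_left)
    finally show ?thesis unfolding A_def .
  qed
  moreover have "(\<lambda>w. \<Sum>p\<in>{p \<in> S1 \<times> S2. add_pair p = e}. h1 (fst p) w * h2 (snd p) w) \<in> polys_Vn n"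
    for e
    using assms fin unfolding polarization_on_def polys_Vn_def
    by (intro gen_alg_sum) (auto intro: gen_alg.mult)
  moreover have "(\<lambda>w. \<Sum>p\<in>{p \<in> S1 \<times> S2. add_pair p = e}. h1 (fst p) w * h2 (snd p) w) = (\<lambda>_. 0)"
    if "e \<notin> add_pair ` (S1 \<times> S2)" for e
  proof -
    have no_pairs: "{p \<in> S1 \<times> S2. add_pair p = e} = {}" using that by blast
    show ?thesis by (simp only: no_pairs sum.empty)
  qed
  moreover have "\<forall>e\<in>add_pair ` (S1 \<times> S2). \<forall>i\<ge>n. e i = 0"
    using assms unfolding polarization_on_def add_pair_def by auto
  ultimately show ?thesis
    using fin unfolding polarization_on_def by blast
qed

lemma polys_V_has_polarization:
  assumes "f \<in> polys_V"
  shows "\<exists>h S. polarization_on n f h S"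
  using assms unfolding polys_V_def
proof (induction f rule: gen_alg.induct)
  case (const c)
  then show ?case using polarization_on_const by blast
next
  case (gen f)
  then obtain j where "f = (\<lambda>v. v j)" by blast
  then show ?case using polarization_on_coordinate[of n j] by blast
next
  case (add f g)
  then show ?case using polarization_on_add by blast
next
  case (mult f g)
  then show ?case using polarization_on_mult by blast
qed

lemma polarization_on_component:
  assumes "polarization_on n f h S" "i < n"
  shows "f (w i) = (\<Sum>e\<in>S. (\<Prod>i'<n. (if i' = i then 1 else 0) ^ e i') * h e w)"
proof -
  have "(\<lambda>j. \<Sum>i'<n. (if i' = i then 1 else 0) * w i' j) = w i"
    using assms(2) by (simp add: if_distrib if_distribR cong: if_cong)
  then show ?thesis using assms(1) unfolding polarization_on_def by metis
qed

lemma pol_nullcone_eq_zero: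
  fixes \<rho> :: "'g \<Rightarrow> ('d::finite \<Rightarrow> 'k::field) \<Rightarrow> ('d \<Rightarrow> 'k)"
  assumes "group G" "finite (carrier G)" "G_module G \<rho>"
  shows "pol_nullcone G \<rho> n = {\<lambda>_ _. 0}"
proof -
  have "w = (\<lambda>_ _. 0)" if w: "w \<in> pol_nullcone G \<rho> n" for w
  proof (rule Vsum_eq_zero_if_invariants_trivial_on_components[OF assms])
    show "w \<in> Vsum n" using w unfolding pol_nullcone_def by blast
    fix i f assume i: "i < n" and f: "f \<in> inv_V G \<rho>"
    then obtain h S where h: "polarization_on n f h S"
      using polys_V_has_polarization unfolding inv_V_def by blast
    have "h e \<in> pol_inv G \<rho> n" for e
      unfolding pol_inv_def using f polarization_on_imp_pol_family[OF h]
      by (intro gen_alg.gen CollectI exI[where x = f] exI[where x = h] exI[where x = e] conjI refl)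
    then have "h e w = h e (\<lambda>_ _. 0)" for e
      using w unfolding pol_nullcone_def by blast
    then show "f (w i) = f (\<lambda>_. 0)"
      using polarization_on_component[OF h i, of w] polarization_on_component[OF h i, of "\<lambda>_ _. 0"]
      by simp
  qed
  then show ?thesis unfolding pol_nullcone_def Vsum_def by auto
qed

theorem theorem3p9:
  fixes G :: "('g, 'm) monoid_scheme"
    and \<rho> :: "'g \<Rightarrow> ('d::finite \<Rightarrow> 'k::field_char_0) \<Rightarrow> ('d \<Rightarrow> 'k)"
  assumes "alg_closed TYPE('k)"
    and "group G" and "finite (carrier G)"
    and "G_module G \<rho>"
  shows "pol_ind G \<rho> = \<infinity>"
proof -
  have "nullcone G \<rho> n = pol_nullcone G \<rho> n" for n
    using nullcone_eq_zero[OF assms(2-4)] pol_nullcone_eq_zero[OF assms(2-4)] by simp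
  then have "{enat n | n. nullcone G \<rho> n = pol_nullcone G \<rho> n} = range enat"
    by auto
  moreover have "infinite (range enat)"
    by (simp add: finite_image_iff inj_on_def)
  ultimately show ?thesis
    unfolding pol_ind_def by (simp add: Sup_enat_def)
qed

end
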